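(* Let $\beta$ be an ordinal and $Q\subseteq I\times\beta$. Then $Q\in\mathcal{B}_V\otimes\mathcal{P}(\beta)$ if and only if every section $Q_\alpha$ ($\alpha<\beta$) lies in some $\boldsymbol{\Sigma}^V_\xi(I)$ and $\mathrm{comp}(Q)<\omega_1$.
   Context: $I=(0,1)$, $V\subseteq I$ a fixed Lebesgue nonmeasurable set, $\mathcal{B}_V=\sigma(\mathcal{B}(I)\cup\{V\})$, and $\mathcal{B}_V\otimes\mathcal{P}(\beta)$ is the product $\sigma$-algebra on $I\times\beta$. Let $C_0=V$, $C_1=I\setminus V$, and let $\{C_n\}_{n\geq2}$ enumerate the open intervals with rational endpoints contained in $I$. Define $\boldsymbol{\Sigma}^V_1(I)$ as the family of unions of subfamilies of $\{C_n\}_{n\in\omega}$; $\boldsymbol{\Pi}^V_\xi(I)$ as the complements (in $I$) of members of $\boldsymbol{\Sigma}^V_\xi(I)$; and for $\xi>1$, $\boldsymbol{\Sigma}^V_\xi(I)=\{\bigcup_{n\in\omega}A^{(n)}: A^{(n)}\in\boldsymbol{\Pi}^V_{\xi_n}(I),\ \xi_n<\xi\}$. For $Q\subseteq I\times\beta$ and $\alpha<\beta$, the section is $Q_\alpha=\{r:(r,\alpha)\in Q\}$; $\mathrm{comp}(Q,\alpha)=\min\{\xi\geq1:Q_\alpha\in\boldsymbol{\Sigma}^V_\xi(I)\}$ and $\mathrm{comp}(Q)=\sup_{\alpha<\beta}\mathrm{comp}(Q,\alpha)$. *)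

theory Defs
  imports "HOL-Analysis.Analysis"
begin

definition unitI :: "real set" where
  "unitI = {0<..<1}"

definition BV :: "real set \<Rightarrow> real measure" where
  "BV V = sigma unitI ({B \<inter> unitI | B. B \<in> sets borel} \<union> {V})"

definition Cfam :: "real set \<Rightarrow> real set set" where
  "Cfam V = {V, unitI - V} \<union>
     {{a<..<b} | a b. a \<in> \<rat> \<and> b \<in> \<rat> \<and> a < b \<and> {a<..<b} \<subseteq> unitI}"

text \<open>Countable ordinals xi \<ge> 1 are represented by well-orders r on subsets of nat with
  nonempty field; xi = 1 iff the field is a singleton; comparison by ordLess / ordLeq.
  SigV V r A means A \<in> Sigma^V_xi(I) where xi is the order type of r.\<close>
inductive SigV :: "real set \<Rightarrow> nat rel \<Rightarrow> real set \<Rightarrow> bool" for V where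
  base: "\<lbrakk>Well_order r; \<exists>x. Field r = {x}; F \<subseteq> Cfam V\<rbrakk> \<Longrightarrow> SigV V r (\<Union>F)"
| step: "\<lbrakk>Well_order r; \<not> (\<exists>x. Field r \<subseteq> {x});
          \<forall>n::nat. Well_order (rs n) \<and> Field (rs n) \<noteq> {} \<and> (rs n, r) \<in> (ordLess :: (nat rel \<times> nat rel) set) \<and>
               (\<exists>B. SigV V (rs n) B \<and> As n = unitI - B)\<rbrakk>
        \<Longrightarrow> SigV V r (\<Union>n::nat. As n)"

definition sect :: "(real \<times> 'b) set \<Rightarrow> 'b \<Rightarrow> real set" where
  "sect Q \<alpha> = {x. (x, \<alpha>) \<in> Q}"

definition in_some_SigV :: "real set \<Rightarrow> real set \<Rightarrow> bool" where
  "in_some_SigV V A \<longleftrightarrow> (\<exists>r. Well_order r \<and> Field r \<noteq> {} \<and> SigV V r A)"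

text \<open>comp(Q) < omega_1: there is a countable ordinal eta \<ge> 1 bounding comp(Q, alpha)
  for every alpha, i.e. every section lies in Sigma^V_xi for some 1 \<le> xi \<le> eta.\<close>
definition comp_lt_omega1 :: "real set \<Rightarrow> (real \<times> 'b) set \<Rightarrow> bool" where
  "comp_lt_omega1 V Q \<longleftrightarrow>
     (\<exists>\<eta>::nat rel. Well_order \<eta> \<and> Field \<eta> \<noteq> {} \<and>
        (\<forall>\<alpha>. \<exists>r. Well_order r \<and> Field r \<noteq> {} \<and> (r, \<eta>) \<in> (ordLeq :: (nat rel \<times> nat rel) set) \<and> SigV V r (sect Q \<alpha>)))"

end

theory Submission
  imports Defs "HOL-Library.Nat_Bijection"
begin

text \<open>
  Call a family \<open>(A\<^sub>\<alpha>)\<^sub>\<alpha>\<close> of subsets of \<open>I\<close> bounded if one countable ordinal \<open>\<eta>\<close> bounds the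
  complexity of all its members. Bounded families are closed under complements and countable
  unions, because countably many countable ordinals have a countable strict upper bound (an
  \<open>\<omega>\<close>-indexed ordinal sum); constant families of Borel sets and of \<open>V\<close> are bounded. Hence the
  sets whose sections form a bounded family form a \<open>\<sigma>\<close>-algebra containing the rectangles, which
  gives one direction.

  Conversely, argue by well-founded induction on the bound \<open>\<eta>\<close>. Where \<open>Q\<^sub>\<alpha>\<close> is a union of
  \<open>C\<^sub>n\<close>'s, the corresponding part of \<open>Q\<close> is a countable union of rectangles \<open>C\<^sub>n \<times> T\<close>. Otherwise
  \<open>Q\<^sub>\<alpha> = \<Union>\<^sub>n (I - B\<^sub>\<alpha>\<^sub>,\<^sub>n)\<close> with each \<open>B\<^sub>\<alpha>\<^sub>,\<^sub>n\<close> of complexity at most an initial segment of \<open>\<eta>\<close>;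
  grouping the \<open>\<alpha>\<close> by \<open>n\<close> and by such a segment leaves countably many pieces, each measurable by
  the induction hypothesis.
\<close>

unbundle cardinal_syntax

section \<open>Countable ordinals\<close>

lemma Well_order_inflationary_mono_map:
  assumes wo: "Well_order r" and maps: "g ` Field r \<subseteq> Field r"
    and mono: "\<And>a b. (a, b) \<in> r - Id \<Longrightarrow> (g a, g b) \<in> r - Id"
    and a: "a \<in> Field r"
  shows "(a, g a) \<in> r"
proof (rule ccontr)
  assume "(a, g a) \<notin> r"
  moreover have "wf (r - Id)" using wo by (simp add: well_order_on_def)
  ultimately obtain m where m: "m \<in> Field r" "(m, g m) \<notin> r"
    and least: "\<And>y. (y, m) \<in> r - Id \<Longrightarrow> y \<in> Field r \<Longrightarrow> (y, g y) \<in> r"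
    using wf_eq_minimal[THEN iffD1, rule_format, of "r - Id" a "{x \<in> Field r. (x, g x) \<notin> r}"] a
    by blast
  have gm: "g m \<in> Field r" using maps m(1) by blast
  have "g m \<noteq> m" using m wo by (auto simp: order_on_defs refl_on_def)
  then have "(g m, m) \<in> r - Id"
    using m gm wo unfolding order_on_defs total_on_def by blast
  then have "(g (g m), g m) \<in> r - Id" and "(g m, g (g m)) \<in> r"
    using mono least gm by blast+
  then show False using wo by (auto simp: order_on_defs antisym_def)
qed

lemma Restr_ordLeq:
  assumes wo: "Well_order r" and B: "B \<subseteq> Field r"
  shows "Restr r B \<le>o r"
proof (rule ccontr)
  let ?rB = "Restr r B"
  have woB: "Well_order ?rB" using wo Well_order_Restr by blast
  have FB: "Field ?rB = B" using wo B by (simp add: Refl_Field_Restr2 order_on_defs)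
  assume "\<not> ?rB \<le>o r"
  then have "r <o ?rB" using not_ordLeq_iff_ordLess[OF wo woB] by blast
  then obtain g where emb: "embed r ?rB g" and not_bij: "\<not> bij_betw g (Field r) B"
    using FB unfolding ordLess_def embedS_def by auto
  have inj: "inj_on g (Field r)" using emb embed_inj_on wo by blast
  have ofilter: "wo_rel.ofilter ?rB (g ` Field r)" using embed_Field_ofilter wo woB emb by blast
  then have gB: "g ` Field r \<subseteq> B"
    using FB woB by (auto simp: wo_rel.ofilter_def wo_rel_def)
  have above: "(a, g a) \<in> r" if "a \<in> Field r" for a
  proof (rule Well_order_inflationary_mono_map[OF wo _ _ that])
    show "g ` Field r \<subseteq> Field r" using gB B by blast
    fix a b assume "(a, b) \<in> r - Id"
    then show "(g a, g b) \<in> r - Id"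
      using embed_compat[OF emb] inj unfolding compat_def inj_on_def by (blast intro: FieldI1 FieldI2)
  qed
  have "B \<subseteq> g ` Field r"
  proof
    fix b assume b: "b \<in> B"
    then have "b \<in> under ?rB (g b)" using above[of b] gB B by (auto simp: under_def)
    then show "b \<in> g ` Field r"
      using ofilter b B woB by (auto simp: wo_rel.ofilter_def wo_rel_def)
  qed
  then show False using not_bij inj gB by (auto simp: bij_betw_def)
qed

lemma compat_inj_on_ordLeq:
  assumes wo: "Well_order r" and wo': "Well_order r'" and maps: "f ` Field r \<subseteq> Field r'"
    and inj: "inj_on f (Field r)" and compat: "compat r r' f"
  shows "r \<le>o r'"
proof -
  let ?A = "f ` Field r"
  have woA: "Well_order (Restr r' ?A)" using wo' Well_order_Restr by blast
  have FA: "Field (Restr r' ?A) = ?A" using wo' maps by (simp add: Refl_Field_Restr2 order_on_defs)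
  have "compat r (Restr r' ?A) f" using compat unfolding compat_def by (auto intro: FieldI1 FieldI2)
  then have "iso r (Restr r' ?A) f" using iso_iff3[OF wo woA] FA inj by (simp add: bij_betw_def)
  then have "(r, Restr r' ?A) \<in> ordIso" using wo woA unfolding ordIso_def by blast
  then show ?thesis using Restr_ordLeq[OF wo' maps] ordIso_ordLeq_trans by blast
qed

lemma Well_order_singleton: "Well_order {(x, x)}"
  by (auto simp: order_on_defs refl_on_def total_on_def trans_def antisym_def Field_def)

definition ordinal_sum :: "(nat \<Rightarrow> 'a rel) \<Rightarrow> (nat \<times> 'a) rel" where
  "ordinal_sum g = {((k, a), (l, b)). k < l \<and> a \<in> Field (g k) \<and> b \<in> Field (g l) \<or> k = l \<and> (a, b) \<in> g k}"

lemma Field_ordinal_sum: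
  assumes "\<And>k. Well_order (g k)"
  shows "Field (ordinal_sum g) = (SIGMA k:UNIV. Field (g k))"
  using assms by (force simp: ordinal_sum_def Field_def order_on_defs refl_on_def)

lemma wf_ordinal_sum:
  assumes "\<And>k. Well_order (g k)"
  shows "wf (ordinal_sum g - Id)"
proof -
  have "ordinal_sum g - Id \<subseteq> inv_image less_than fst \<union> same_fst (\<lambda>_. True) (\<lambda>k. g k - Id)"
    by (auto simp: ordinal_sum_def same_fst_def)
  moreover have "wf (inv_image less_than fst \<union> same_fst (\<lambda>_. True) (\<lambda>k. g k - Id))"
    using assms by (intro wf_union_compatible wf_same_fst)
      (auto simp: well_order_on_def same_fst_def)
  ultimately show ?thesis by (rule wf_subset[rotated])
qed

lemma Well_order_ordinal_sum:
  assumes wo: "\<And>k. Well_order (g k)"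
  shows "Well_order (ordinal_sum g)"
proof -
  have lin: "\<And>k. linear_order_on (Field (g k)) (g k)"
    using wo by (simp add: well_order_on_def)
  have "refl_on (Field (ordinal_sum g)) (ordinal_sum g)"
    using lin unfolding Field_ordinal_sum[OF wo]
    by (auto simp: ordinal_sum_def order_on_defs refl_on_def)
  moreover have "trans (ordinal_sum g)"
    using lin unfolding trans_def ordinal_sum_def
    by (clarsimp simp: order_on_defs) (metis FieldI1 FieldI2 transE)
  moreover have "antisym (ordinal_sum g)"
    using lin unfolding antisym_def ordinal_sum_def by (auto simp: order_on_defs antisym_def)
  moreover have "total_on (Field (ordinal_sum g)) (ordinal_sum g)"
    unfolding total_on_def Field_ordinal_sum[OF wo]
  proof (intro ballI impI)
    fix p q assume p: "p \<in> (SIGMA k:UNIV. Field (g k))" and q: "q \<in> (SIGMA k:UNIV. Field (g k))"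
      and "p \<noteq> q"
    obtain k a l b where "p = (k, a)" "q = (l, b)" "a \<in> Field (g k)" "b \<in> Field (g l)"
      using p q by auto
    moreover have "total_on (Field (g k)) (g k)" using lin by (simp add: order_on_defs)
    ultimately show "(p, q) \<in> ordinal_sum g \<or> (q, p) \<in> ordinal_sum g"
      using \<open>p \<noteq> q\<close> by (cases k l rule: linorder_cases) (auto simp: ordinal_sum_def total_on_def)
  qed
  ultimately show ?thesis
    using wf_ordinal_sum[of g, OF wo] by (auto simp: order_on_defs intro: FieldI1 FieldI2)
qed

lemma ordLess_ordinal_sum:
  assumes wo: "\<And>k. Well_order (g k)" and nonempty: "Field (g (Suc k)) \<noteq> {}"
  shows "g k <o ordinal_sum g"
proof -
  let ?R = "ordinal_sum g"
  obtain c where c: "c \<in> Field (g (Suc k))" using nonempty by blast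
  let ?U = "underS ?R (Suc k, c)"
  have woR: "Well_order ?R" using Well_order_ordinal_sum[of g, OF wo] .
  have FU: "Field (Restr ?R ?U) = ?U"
    using woR by (simp add: Field_Restr_ofilter wo_rel_def wo_rel.underS_ofilter)
  have in_U: "(k, a) \<in> ?U" if "a \<in> Field (g k)" for a
    using that c by (auto simp: underS_def ordinal_sum_def)
  have "g k \<le>o Restr ?R ?U"
  proof (rule compat_inj_on_ordLeq[where f = "Pair k"])
    show "Well_order (g k)" "Well_order (Restr ?R ?U)" using wo woR Well_order_Restr by blast+
    show "Pair k ` Field (g k) \<subseteq> Field (Restr ?R ?U)" using in_U FU by blast
    show "inj_on (Pair k) (Field (g k))" by (simp add: inj_on_def)
    show "compat (g k) (Restr ?R ?U) (Pair k)"
      using in_U by (auto simp: compat_def ordinal_sum_def intro: FieldI1 FieldI2)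
  qed
  moreover have "Restr ?R ?U <o ?R"
    using underS_Restr_ordLess[OF woR] c Field_ordinal_sum[of g, OF wo] by blast
  ultimately show ?thesis using ordLeq_ordLess_trans by blast
qed

lemma ex_countable_ordLess_bound:
  fixes h :: "nat \<Rightarrow> nat rel"
  assumes wo: "\<And>k. Well_order (h k)"
  shows "\<exists>\<eta>::nat rel. Well_order \<eta> \<and> \<not> (\<exists>x. Field \<eta> \<subseteq> {x}) \<and> (\<forall>k. h k <o \<eta>)"
proof -
  \<comment> \<open>Interleave the \<open>h k\<close> with one-point orders, so that each \<open>h k\<close> is followed by a nonempty summand.\<close>
  define g where "g k = (if even k then h (k div 2) else {(0, 0)})" for k
  have wo_g: "Well_order (g k)" for k
    using wo Well_order_singleton[of "0::nat"] by (simp add: g_def del: Field_insert)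
  have Field_odd: "Field (g (Suc (2 * k))) = {0}" for k by (auto simp: g_def Field_def)
  let ?R = "ordinal_sum g"
  define \<eta> where "\<eta> = dir_image ?R prod_encode"
  have inj: "inj_on prod_encode (Field ?R)" using inj_prod_encode by (blast intro: inj_on_subset)
  have woR: "Well_order ?R" using Well_order_ordinal_sum[of g, OF wo_g] .
  have iso: "(?R, \<eta>) \<in> ordIso" unfolding \<eta>_def using dir_image_ordIso[OF woR inj] .
  have "h k <o ?R" for k
    using ordLess_ordinal_sum[of g "2 * k", OF wo_g] Field_odd by (simp add: g_def)
  then have "\<forall>k. h k <o \<eta>" using iso ordLess_ordIso_trans by blast
  moreover have "prod_encode (1, 0) \<in> Field \<eta>" "prod_encode (3, 0) \<in> Field \<eta>"
    using Field_odd[of 0] Field_odd[of 1]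
    by (auto simp: \<eta>_def dir_image_Field Field_ordinal_sum[of g, OF wo_g])
  moreover have "prod_encode (1::nat, 0::nat) \<noteq> prod_encode (3, 0)" by simp
  ultimately show ?thesis using Well_order_dir_image[OF woR inj] \<eta>_def by blast
qed

section \<open>Families of uniformly bounded complexity\<close>

definition SigV_le :: "real set \<Rightarrow> nat rel \<Rightarrow> real set \<Rightarrow> bool" where
  "SigV_le V \<eta> A \<longleftrightarrow> (\<exists>r. Well_order r \<and> Field r \<noteq> {} \<and> r \<le>o \<eta> \<and> SigV V r A)"

definition bounded_SigV :: "real set \<Rightarrow> ('c \<Rightarrow> real set) \<Rightarrow> bool" where
  "bounded_SigV V A \<longleftrightarrow> (\<exists>\<eta>. Well_order \<eta> \<and> Field \<eta> \<noteq> {} \<and> (\<forall>\<alpha>. SigV_le V \<eta> (A \<alpha>)))"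

lemma comp_lt_omega1_iff_bounded_SigV: "comp_lt_omega1 V Q \<longleftrightarrow> bounded_SigV V (sect Q)"
  by (simp add: comp_lt_omega1_def bounded_SigV_def SigV_le_def)

lemma SigV_subset_unitI:
  assumes "V \<subseteq> unitI" and "SigV V r A"
  shows "A \<subseteq> unitI"
  using assms(2) by induction (use assms(1) in \<open>auto simp: Cfam_def\<close>)

lemma SigV_le_ordLeq_trans:
  "SigV_le V \<eta> A \<Longrightarrow> \<eta> \<le>o \<eta>' \<Longrightarrow> SigV_le V \<eta>' A"
  unfolding SigV_le_def using ordLeq_transitive by blast

lemma SigV_Union_Diff:
  fixes \<rho> :: "nat \<Rightarrow> nat rel" and B :: "nat \<Rightarrow> real set"
  assumes "Well_order \<eta>" and "\<not> (\<exists>x. Field \<eta> \<subseteq> {x})"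
    and "\<And>n. SigV_le V (\<rho> n) (B n)" and "\<And>n. \<rho> n <o \<eta>"
  shows "SigV_le V \<eta> (\<Union>n. unitI - B n)"
proof -
  obtain rs where rs: "\<And>n. Well_order (rs n) \<and> Field (rs n) \<noteq> {} \<and> rs n \<le>o \<rho> n \<and> SigV V (rs n) (B n)"
    using assms(3) unfolding SigV_le_def by metis
  have "SigV V \<eta> (\<Union>n. unitI - B n)"
  proof (rule SigV.step[where As = "\<lambda>n. unitI - B n"])
    show "\<forall>n. Well_order (rs n) \<and> Field (rs n) \<noteq> {} \<and> rs n <o \<eta> \<and>
        (\<exists>B'. SigV V (rs n) B' \<and> unitI - B n = unitI - B')"
      using assms(4) rs ordLeq_ordLess_trans by blast
  qed (use assms(1,2) in auto)
  then show ?thesis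
    unfolding SigV_le_def using assms(1,2) ordLeq_reflexive by blast
qed

lemma bounded_SigV_Union_Diff:
  fixes B :: "nat \<Rightarrow> 'c \<Rightarrow> real set"
  assumes "\<And>k. bounded_SigV V (B k)"
  shows "bounded_SigV V (\<lambda>\<alpha>. \<Union>k. unitI - B k \<alpha>)"
proof -
  obtain \<rho> where \<rho>: "\<And>k. Well_order (\<rho> k)" "\<And>k \<alpha>. SigV_le V (\<rho> k) (B k \<alpha>)"
    using assms unfolding bounded_SigV_def by metis
  obtain \<eta> :: "nat rel" where \<eta>: "Well_order \<eta>" "\<not> (\<exists>x. Field \<eta> \<subseteq> {x})" "\<And>k. \<rho> k <o \<eta>"
    using ex_countable_ordLess_bound[of \<rho>, OF \<rho>(1)] by blast
  then have "SigV_le V \<eta> (\<Union>k. unitI - B k \<alpha>)" for \<alpha>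
    using SigV_Union_Diff[of \<eta> V \<rho> "\<lambda>k. B k \<alpha>"] \<rho>(2) by blast
  then show ?thesis unfolding bounded_SigV_def using \<eta>(1,2) by blast
qed

lemma bounded_SigV_Diff:
  "bounded_SigV V A \<Longrightarrow> bounded_SigV V (\<lambda>\<alpha>. unitI - A \<alpha>)"
  using bounded_SigV_Union_Diff[of V "\<lambda>_. A"] by simp

lemma bounded_SigV_subset_unitI:
  "V \<subseteq> unitI \<Longrightarrow> bounded_SigV V A \<Longrightarrow> A \<alpha> \<subseteq> unitI"
  unfolding bounded_SigV_def SigV_le_def using SigV_subset_unitI by blast

lemma bounded_SigV_Union:
  fixes A :: "nat \<Rightarrow> 'c \<Rightarrow> real set"
  assumes V: "V \<subseteq> unitI" and A: "\<And>k. bounded_SigV V (A k)"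
  shows "bounded_SigV V (\<lambda>\<alpha>. \<Union>k. A k \<alpha>)"
proof -
  have "(\<lambda>\<alpha>. \<Union>k. A k \<alpha>) = (\<lambda>\<alpha>. \<Union>k. unitI - (unitI - A k \<alpha>))"
    using bounded_SigV_subset_unitI[OF V A] by (simp add: Diff_Diff_Int Int_absorb1)
  then show ?thesis using bounded_SigV_Union_Diff[OF bounded_SigV_Diff[OF A]] by simp
qed

lemma bounded_SigV_Union_Cfam:
  assumes "\<And>\<alpha>. F \<alpha> \<subseteq> Cfam V"
  shows "bounded_SigV V (\<lambda>\<alpha>. \<Union>(F \<alpha>))"
proof -
  let ?one = "{(0::nat, 0::nat)}"
  have wo: "Well_order ?one" by (rule Well_order_singleton)
  have Field: "Field ?one = {0}" by (simp add: Field_def)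
  have "SigV V ?one (\<Union>(F \<alpha>))" for \<alpha>
    using assms wo Field by (intro SigV.base) auto
  then have "SigV_le V ?one (\<Union>(F \<alpha>))" for \<alpha>
    unfolding SigV_le_def using wo Field ordLeq_reflexive by blast
  then show ?thesis unfolding bounded_SigV_def using wo Field by blast
qed

lemma bounded_SigV_If:
  assumes "bounded_SigV V A" and "bounded_SigV V B"
  shows "bounded_SigV V (\<lambda>\<alpha>. if P \<alpha> then A \<alpha> else B \<alpha>)"
proof -
  obtain \<eta>A \<eta>B where A: "Well_order \<eta>A" "Field \<eta>A \<noteq> {}" "\<And>\<alpha>. SigV_le V \<eta>A (A \<alpha>)"
    and B: "Well_order \<eta>B" "Field \<eta>B \<noteq> {}" "\<And>\<alpha>. SigV_le V \<eta>B (B \<alpha>)"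
    using assms unfolding bounded_SigV_def by metis
  obtain \<eta> where \<eta>: "\<eta> \<in> {\<eta>A, \<eta>B}" "\<eta>A \<le>o \<eta>" "\<eta>B \<le>o \<eta>"
    using ordLeq_total[OF A(1) B(1)] ordLeq_reflexive[OF A(1)] ordLeq_reflexive[OF B(1)] by blast
  then have "SigV_le V \<eta> (A \<alpha>)" "SigV_le V \<eta> (B \<alpha>)" for \<alpha>
    using A(3) B(3) SigV_le_ordLeq_trans by blast+
  then show ?thesis
    unfolding bounded_SigV_def using A B \<eta>(1) by (intro exI[of _ \<eta>]) auto
qed

lemma
  assumes "V \<subseteq> unitI"
  shows sets_BV: "sets (BV V) = sigma_sets unitI ({B \<inter> unitI | B. B \<in> sets borel} \<union> {V})"
    and space_BV: "space (BV V) = unitI"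
  using assms unfolding BV_def by (auto intro!: sets_measure_of space_measure_of)

lemma Cfam_subset_sets_BV:
  assumes "V \<subseteq> unitI"
  shows "Cfam V \<subseteq> sets (BV V)"
proof -
  have "{a<..<b} \<in> sets (BV V)" if "{a<..<b} \<subseteq> unitI" for a b
    using that sets_BV[OF assms] by (auto intro!: sigma_sets.Basic exI[of _ "{a<..<b}"])
  moreover have "V \<in> sets (BV V)" using sets_BV[OF assms] by auto
  ultimately show ?thesis
    using sets.compl_sets[of V "BV V"] space_BV[OF assms] by (auto simp: Cfam_def)
qed

lemma countable_Cfam: "countable (Cfam V)"
proof -
  have "Cfam V \<subseteq> {V, unitI - V} \<union> (\<lambda>(a, b). {a<..<b}) ` (\<rat> \<times> \<rat>)"
    unfolding Cfam_def by auto
  moreover have "countable ({V, unitI - V} \<union> (\<lambda>(a, b). {a<..<b::real}) ` (\<rat> \<times> \<rat>))"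
    using countable_rat by auto
  ultimately show ?thesis using countable_subset by blast
qed

lemma open_Int_unitI_eq_Union_Cfam:
  assumes "open S"
  shows "S \<inter> unitI = \<Union>{C \<in> Cfam V. C \<subseteq> S \<inter> unitI}"
proof (intro equalityI subsetI)
  fix x assume x: "x \<in> S \<inter> unitI"
  moreover have "open (S \<inter> unitI)" using assms by (auto simp: unitI_def)
  ultimately obtain e where e: "e > 0" "\<And>y. \<bar>y - x\<bar> < e \<Longrightarrow> y \<in> S \<inter> unitI"
    unfolding open_real by blast
  obtain a b where ab: "a \<in> \<rat>" "x - e < a" "a < x" "b \<in> \<rat>" "x < b" "b < x + e"
    using Rats_dense_in_real[of "x - e" x] Rats_dense_in_real[of x "x + e"] e(1) by auto
  then have sub: "{a<..<b} \<subseteq> S \<inter> unitI" using e(2) by auto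
  then have "{a<..<b} \<in> Cfam V" using ab unfolding Cfam_def by auto
  then show "x \<in> \<Union>{C \<in> Cfam V. C \<subseteq> S \<inter> unitI}" using sub ab by auto
qed blast

lemma bounded_SigV_empty: "bounded_SigV V (\<lambda>_. {})"
  using bounded_SigV_Union_Cfam[of "\<lambda>_. {}" V] by simp

lemma bounded_SigV_borel:
  assumes V: "V \<subseteq> unitI" and "B \<in> sets borel"
  shows "bounded_SigV V (\<lambda>_::'c. B \<inter> unitI)"
proof -
  have "B \<in> sigma_sets UNIV {S. open S}" using assms(2) sets_borel by blast
  then show ?thesis
  proof induction
    case (Basic S)
    then show ?case
      by (subst open_Int_unitI_eq_Union_Cfam[of S V]) (auto intro: bounded_SigV_Union_Cfam)
  next
    case Empty
    then show ?case using bounded_SigV_empty by simp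
  next
    case (Compl S)
    then show ?case using bounded_SigV_Diff[OF Compl.IH] by (simp add: Diff_Int_distrib2)
  next
    case (Union S)
    have "(\<Union>i. S i) \<inter> unitI = (\<Union>i. S i \<inter> unitI)" by blast
    then show ?case using bounded_SigV_Union[OF V Union.IH] by simp
  qed
qed

lemma bounded_SigV_sets_BV:
  assumes V: "V \<subseteq> unitI" and "A \<in> sets (BV V)"
  shows "bounded_SigV V (\<lambda>_::'c. A)"
proof -
  have "A \<in> sigma_sets unitI ({B \<inter> unitI | B. B \<in> sets borel} \<union> {V})"
    using assms sets_BV by blast
  then show ?thesis
  proof induction
    case (Basic A)
    then show ?case
      using bounded_SigV_borel[OF V] bounded_SigV_Union_Cfam[of "\<lambda>_. {V}" V] by (auto simp: Cfam_def)
  next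
    case Empty
    then show ?case by (rule bounded_SigV_empty)
  next
    case (Compl A)
    then show ?case using bounded_SigV_Diff by blast
  next
    case (Union A)
    then show ?case using bounded_SigV_Union[OF V Union.IH] by simp
  qed
qed

lemma bounded_SigV_sect:
  fixes Q :: "(real \<times> 'c) set"
  assumes V: "V \<subseteq> unitI" and "Q \<in> sets (BV V \<Otimes>\<^sub>M count_space UNIV)"
  shows "bounded_SigV V (sect Q)"
proof -
  have "Q \<in> sigma_sets (unitI \<times> UNIV) {A \<times> T | A T. A \<in> sets (BV V) \<and> T \<in> sets (count_space UNIV)}"
    using assms by (simp add: sets_pair_measure space_BV)
  then show ?thesis
  proof induction
    case (Basic Q)
    then obtain A T where "Q = A \<times> T" "A \<in> sets (BV V)" by blast
    moreover have "sect (A \<times> T) = (\<lambda>\<alpha>. if \<alpha> \<in> T then A else {})"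
      by (rule ext) (auto simp: sect_def)
    ultimately show ?case
      using bounded_SigV_If[OF bounded_SigV_sets_BV[OF V] bounded_SigV_empty] by auto
  next
    case Empty
    then show ?case using bounded_SigV_empty by (simp add: sect_def)
  next
    case (Compl Q)
    have "sect (unitI \<times> UNIV - Q) = (\<lambda>\<alpha>. unitI - sect Q \<alpha>)" by (auto simp: sect_def)
    then show ?case using bounded_SigV_Diff[OF Compl.IH] by simp
  next
    case (Union Q)
    have "sect (\<Union>i. Q i) = (\<lambda>\<alpha>. \<Union>i. sect (Q i) \<alpha>)" by (rule ext) (auto simp: sect_def)
    then show ?case using bounded_SigV_Union[OF V Union.IH] by simp
  qed
qed

section \<open>Sets whose sections have bounded complexity\<close>

lemma sets_pair_count_space_Union:
  fixes N :: "'a measure" and A :: "'c \<Rightarrow> 'a set"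
  assumes "countable \<C>" and "\<C> \<subseteq> sets N" and "\<forall>\<alpha>\<in>S. \<exists>F \<subseteq> \<C>. A \<alpha> = \<Union>F"
  shows "{(x, \<alpha>). \<alpha> \<in> S \<and> x \<in> A \<alpha>} \<in> sets (N \<Otimes>\<^sub>M count_space UNIV)"
proof -
  obtain F where F: "\<forall>\<alpha>\<in>S. F \<alpha> \<subseteq> \<C> \<and> A \<alpha> = \<Union>(F \<alpha>)"
    using assms(3) by (rule bchoice[THEN exE])
  then have "{(x, \<alpha>). \<alpha> \<in> S \<and> x \<in> A \<alpha>} = (\<Union>C\<in>\<C>. C \<times> {\<alpha> \<in> S. C \<in> F \<alpha>})"
    by fastforce
  then show ?thesis using assms(1,2) by (auto intro!: sets.countable_UN'' pair_measureI)
qed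

lemma sets_pair_count_space_Union_Diff:
  fixes N :: "'a measure" and A :: "'c \<Rightarrow> 'a set"
  assumes "countable J"
    and sets: "\<And>j (T :: 'c set) A'. j \<in> J \<Longrightarrow> \<forall>\<alpha>\<in>T. P j (A' \<alpha>) \<Longrightarrow>
      {(x, \<alpha>). \<alpha> \<in> T \<and> x \<in> A' \<alpha>} \<in> sets (N \<Otimes>\<^sub>M count_space UNIV)"
    and "\<forall>\<alpha>\<in>S. \<exists>B :: nat \<Rightarrow> 'a set. A \<alpha> = (\<Union>n. space N - B n) \<and> (\<forall>n. \<exists>j\<in>J. P j (B n))"
  shows "{(x, \<alpha>). \<alpha> \<in> S \<and> x \<in> A \<alpha>} \<in> sets (N \<Otimes>\<^sub>M count_space UNIV)"
proof -
  obtain B :: "'c \<Rightarrow> nat \<Rightarrow> 'a set"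
    where B: "\<forall>\<alpha>\<in>S. A \<alpha> = (\<Union>n. space N - B \<alpha> n) \<and> (\<forall>n. \<exists>j\<in>J. P j (B \<alpha> n))"
    using assms(3) by (rule bchoice[THEN exE])
  \<comment> \<open>Group the indices \<open>\<alpha>\<close> according to a \<open>j\<close> witnessing the complexity of \<open>B \<alpha> n\<close>.\<close>
  define T where "T n j = {\<alpha> \<in> S. P j (B \<alpha> n)}" for n j
  define X where "X n j = {(x, \<alpha>). \<alpha> \<in> T n j \<and> x \<in> B \<alpha> n}" for n j
  have "{(x, \<alpha>). \<alpha> \<in> S \<and> x \<in> A \<alpha>} = (\<Union>n. \<Union>j\<in>J. space N \<times> T n j - X n j)"
  proof (intro equalityI subsetI)
    fix p assume "p \<in> {(x, \<alpha>). \<alpha> \<in> S \<and> x \<in> A \<alpha>}"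
    then obtain x \<alpha> n where p: "p = (x, \<alpha>)" "\<alpha> \<in> S" "x \<in> space N" "x \<notin> B \<alpha> n" using B by auto
    moreover obtain j where "j \<in> J" "P j (B \<alpha> n)" using B p(2) by blast
    ultimately show "p \<in> (\<Union>n. \<Union>j\<in>J. space N \<times> T n j - X n j)" by (auto simp: T_def X_def)
  qed (use B in \<open>auto simp: T_def X_def\<close>)
  moreover have "space N \<times> T n j - X n j \<in> sets (N \<Otimes>\<^sub>M count_space UNIV)" if "j \<in> J" for n j
    using sets[OF that, of "T n j" "\<lambda>\<alpha>. B \<alpha> n"] by (auto simp: T_def X_def intro!: pair_measureI)
  then have "(\<Union>j\<in>J. space N \<times> T n j - X n j) \<in> sets (N \<Otimes>\<^sub>M count_space UNIV)" for n
    using assms(1) by (blast intro: sets.countable_UN'')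
  ultimately show ?thesis by (simp add: sets.countable_UN)
qed

lemma SigV_le_cases:
  assumes "SigV_le V \<eta> A"
  obtains (Union_Cfam) F where "F \<subseteq> Cfam V" and "A = \<Union>F"
  | (Union_Diff) B :: "nat \<Rightarrow> real set" where "A = (\<Union>n. unitI - B n)"
      and "\<And>n. \<exists>b\<in>Field \<eta>. SigV_le V (Restr \<eta> (underS \<eta> b)) (B n)"
proof -
  obtain r where r: "r \<le>o \<eta>" "SigV V r A" using assms unfolding SigV_le_def by blast
  from r(2) show thesis
  proof cases
    case (base F)
    then show thesis using that(1) by blast
  next
    case (step rs As)
    have "\<forall>n. \<exists>B. SigV V (rs n) B \<and> As n = unitI - B" using step(4) by blast
    then obtain B where B: "\<forall>n. SigV V (rs n) (B n) \<and> As n = unitI - B n" by (rule choice[THEN exE])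
    have index: "\<exists>b\<in>Field \<eta>. SigV_le V (Restr \<eta> (underS \<eta> b)) (B n)" for n
    proof -
      have "rs n <o \<eta>" using step(4) r(1) ordLess_ordLeq_trans by blast
      then obtain b where "b \<in> Field \<eta>" "(rs n, Restr \<eta> (underS \<eta> b)) \<in> ordIso"
        using ordLess_iff_ordIso_Restr step(4) unfolding ordLess_def by blast
      moreover have "Well_order (rs n) \<and> Field (rs n) \<noteq> {}" using step(4) by blast
      ultimately show ?thesis
        using B ordIso_imp_ordLeq unfolding SigV_le_def by blast
    qed
    have "A = (\<Union>n. unitI - B n)" using step(1) B by simp
    then show thesis using index by (rule that(2))
  qed
qed

lemma sets_pair_if_SigV_le:
  fixes \<eta> :: "nat rel" and A :: "'c \<Rightarrow> real set"
  assumes V: "V \<subseteq> unitI" and "Well_order \<eta>" and "\<forall>\<alpha>\<in>S. SigV_le V \<eta> (A \<alpha>)"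
  shows "{(x, \<alpha>). \<alpha> \<in> S \<and> x \<in> A \<alpha>} \<in> sets (BV V \<Otimes>\<^sub>M count_space UNIV)"
  using assms(2,3)
proof (induction \<eta> arbitrary: S A rule: wf_induct_rule[OF wf_ordLess])
  case (1 \<eta>)
  define S1 where "S1 = {\<alpha> \<in> S. \<exists>F \<subseteq> Cfam V. A \<alpha> = \<Union>F}"
  have "{(x, \<alpha>). \<alpha> \<in> S1 \<and> x \<in> A \<alpha>} \<in> sets (BV V \<Otimes>\<^sub>M count_space UNIV)"
    by (rule sets_pair_count_space_Union[OF countable_Cfam Cfam_subset_sets_BV[OF V]])
      (simp add: S1_def)
  moreover have "{(x, \<alpha>). \<alpha> \<in> S - S1 \<and> x \<in> A \<alpha>} \<in> sets (BV V \<Otimes>\<^sub>M count_space UNIV)"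
  proof (rule sets_pair_count_space_Union_Diff[where J = "Field \<eta>"
        and P = "\<lambda>b. SigV_le V (Restr \<eta> (underS \<eta> b))"])
    show "countable (Field \<eta>)" by simp
  next
    fix b and T :: "'c set" and A' assume b: "b \<in> Field \<eta>"
      and T: "\<forall>\<alpha>\<in>T. SigV_le V (Restr \<eta> (underS \<eta> b)) (A' \<alpha>)"
    have "Restr \<eta> (underS \<eta> b) <o \<eta>" using underS_Restr_ordLess[OF "1.prems"(1)] b by blast
    moreover have "Well_order (Restr \<eta> (underS \<eta> b))" by (rule Well_order_Restr[OF "1.prems"(1)])
    ultimately show "{(x, \<alpha>). \<alpha> \<in> T \<and> x \<in> A' \<alpha>} \<in> sets (BV V \<Otimes>\<^sub>M count_space UNIV)"
      using T by (rule "1.IH")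
  next
    show "\<forall>\<alpha>\<in>S - S1. \<exists>B :: nat \<Rightarrow> real set. A \<alpha> = (\<Union>n. space (BV V) - B n) \<and>
        (\<forall>n. \<exists>b\<in>Field \<eta>. SigV_le V (Restr \<eta> (underS \<eta> b)) (B n))"
    proof
      fix \<alpha> assume \<alpha>: "\<alpha> \<in> S - S1"
      then have "SigV_le V \<eta> (A \<alpha>)" using "1.prems"(2) by blast
      then show "\<exists>B :: nat \<Rightarrow> real set. A \<alpha> = (\<Union>n. space (BV V) - B n) \<and>
          (\<forall>n. \<exists>b\<in>Field \<eta>. SigV_le V (Restr \<eta> (underS \<eta> b)) (B n))"
      proof (cases rule: SigV_le_cases)
        case (Union_Cfam F)
        then show ?thesis using \<alpha> unfolding S1_def by blast
      next
        case (Union_Diff B)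
        then show ?thesis using space_BV[OF V] by (intro exI[of _ B]) simp
      qed
    qed
  qed
  moreover have "{(x, \<alpha>). \<alpha> \<in> S \<and> x \<in> A \<alpha>} =
      {(x, \<alpha>). \<alpha> \<in> S1 \<and> x \<in> A \<alpha>} \<union> {(x, \<alpha>). \<alpha> \<in> S - S1 \<and> x \<in> A \<alpha>}"
    unfolding S1_def by blast
  ultimately show ?case by simp
qed

theorem lemma5p1:
  fixes V :: "real set" and Q :: "(real \<times> 'b::wellorder) set"
  assumes "V \<subseteq> unitI" and "V \<notin> sets lebesgue"
    and "Q \<subseteq> unitI \<times> UNIV"
  shows "Q \<in> sets (BV V \<Otimes>\<^sub>M count_space UNIV) \<longleftrightarrow>
         ((\<forall>\<alpha>. in_some_SigV V (sect Q \<alpha>)) \<and> comp_lt_omega1 V Q)"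
proof
  assume "Q \<in> sets (BV V \<Otimes>\<^sub>M count_space UNIV)"
  then have "bounded_SigV V (sect Q)" using bounded_SigV_sect[OF assms(1)] by blast
  then show "(\<forall>\<alpha>. in_some_SigV V (sect Q \<alpha>)) \<and> comp_lt_omega1 V Q"
    unfolding comp_lt_omega1_iff_bounded_SigV bounded_SigV_def SigV_le_def in_some_SigV_def by blast
next
  assume "(\<forall>\<alpha>. in_some_SigV V (sect Q \<alpha>)) \<and> comp_lt_omega1 V Q"
  then obtain \<eta> where "Well_order \<eta>" "\<forall>\<alpha>\<in>UNIV. SigV_le V \<eta> (sect Q \<alpha>)"
    unfolding comp_lt_omega1_iff_bounded_SigV bounded_SigV_def by blast
  then have "{(x, \<alpha>). \<alpha> \<in> UNIV \<and> x \<in> sect Q \<alpha>} \<in> sets (BV V \<Otimes>\<^sub>M count_space UNIV)"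
    by (rule sets_pair_if_SigV_le[OF assms(1)])
  moreover have "{(x, \<alpha>). \<alpha> \<in> UNIV \<and> x \<in> sect Q \<alpha>} = Q" by (auto simp: sect_def)
  ultimately show "Q \<in> sets (BV V \<Otimes>\<^sub>M count_space UNIV)" by simp
qed

end
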